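(* Consider POWERSET MALIQUANT. The sequence starts at a heap of size one, and the first eight nim-values are, $0,0,1,0,2,1,4,8$. Otherwise, if $n=2k+1, k\ge 4$, then $\mathcal{SG}(n)=2^k$, and if $n\ge 10$ is even, then $\mathcal{SG}(n)=\mathcal{SG}(n/2)$.
   Context: POWERSET MALIQUANT is the impartial normal-play game on positive integer heaps where from a heap $n$ a player chooses any nonempty set of nondivisors $k$ of $n$ with $1\le k<n$ and moves to the disjunctive sum of those heaps; a heap with no such nondivisors is terminal. $\mathcal{SG}$ (nim-value) denotes the Sprague-Grundy value (mex rule, nim-sum). *)

theory Defs
  imports Main
begin

definition mex :: "nat set \<Rightarrow> nat" where
  "mex A = (LEAST m. m \<notin> A)"

text \<open>Nondivisors k of n with 1 \<le> k < n (the heaps one may move to).\<close>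
definition nondivs :: "nat \<Rightarrow> nat set" where
  "nondivs n = {k. 1 \<le> k \<and> k < n \<and> \<not> k dvd n}"

definition nimsum :: "(nat \<Rightarrow> nat) \<Rightarrow> nat set \<Rightarrow> nat" where
  "nimsum f S = foldr (\<lambda>k a. xor (f k) a) (sorted_list_of_set S) 0"

definition pm_step :: "(nat \<Rightarrow> nat) \<Rightarrow> nat \<Rightarrow> nat" where
  "pm_step f n = mex {nimsum f S | S. S \<subseteq> nondivs n \<and> S \<noteq> {}}"

text \<open>Table of nim-values of heaps 1..n (value at 0 is an irrelevant dummy 0).\<close>
primrec pm_upto :: "nat \<Rightarrow> nat \<Rightarrow> nat" where
  "pm_upto 0 = (\<lambda>_. 0)"
| "pm_upto (Suc n) = (pm_upto n)(Suc n := pm_step (pm_upto n) (Suc n))"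

definition pm_sg :: "nat \<Rightarrow> nat" where
  "pm_sg n = pm_upto n n"

end

theory Submission
  imports Defs
begin

text \<open>Let \<open>c\<^sub>0, c\<^sub>1, c\<^sub>2, \<dots> = 3, 5, 7, 8, 9, 11, 13, \<dots>\<close>. Every heap other than 1, 2, 4
  has the form \<open>c\<^sub>e * 2 ^ b\<close>, and its nim-value is \<open>2 ^ e\<close>; heaps 1, 2, 4 have value 0.
  By strong induction, the options of \<open>n = c\<^sub>e * 2 ^ b\<close> are nim-sums of values that are 0
  or powers of two other than \<open>2 ^ e\<close> (the smaller heaps of value \<open>2 ^ e\<close>, namely
  \<open>c\<^sub>e * 2 ^ a\<close> with \<open>a < b\<close>, all divide \<open>n\<close>), so \<open>2 ^ e\<close> is not an option. Every
  \<open>x < 2 ^ e\<close> is one: for \<open>i < e\<close> the multiple \<open>c\<^sub>i * 2 ^ a\<close> in the interval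
  \<open>(n / 2, n)\<close> is a nondivisor of value \<open>2 ^ i\<close>, and 0 is the value of a nondivisor
  2 or 4, or the nim-sum of a pair of nondivisors \<open>m, 2 * m\<close>.\<close>

lemma mex_eqI:
  assumes "m \<notin> A" and "\<And>x. x < m \<Longrightarrow> x \<in> A"
  shows "mex A = m"
  unfolding mex_def using assms by (intro Least_equality) (auto simp flip: not_less)

lemma nimsum_empty [simp]: "nimsum f {} = 0"
  by (simp add: nimsum_def)

lemma nimsum_insert:
  assumes "finite S" and "x \<notin> S"
  shows "nimsum f (insert x S) = xor (f x) (nimsum f S)"
proof -
  have "foldr (\<lambda>k a. xor (f k) a) (insort x xs) 0 =
      xor (f x) (foldr (\<lambda>k a. xor (f k) a) xs 0)" for xs :: "nat list"
    by (induction xs) (auto simp: ac_simps)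
  then show ?thesis
    using assms by (simp add: nimsum_def)
qed

lemma nimsum_singleton: "nimsum f {x} = f x"
  using nimsum_insert[of "{}" x f] by simp

lemma nimsum_doubleton: "x \<noteq> y \<Longrightarrow> nimsum f {x, y} = xor (f x) (f y)"
  using nimsum_insert[of "{y}" x f] by (simp add: nimsum_singleton)

lemma nimsum_cong: "finite S \<Longrightarrow> (\<And>k. k \<in> S \<Longrightarrow> f k = g k) \<Longrightarrow> nimsum f S = nimsum g S"
  by (induction S rule: finite_induct) (auto simp: nimsum_insert)

lemma not_bit_nimsum:
  "finite S \<Longrightarrow> (\<And>k. k \<in> S \<Longrightarrow> \<not> bit (f k) e) \<Longrightarrow> \<not> bit (nimsum f S) e"
  by (induction S rule: finite_induct) (auto simp: nimsum_insert bit_xor_iff)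

lemma xor_pow2_eq_add:
  fixes y :: nat
  assumes "y < 2 ^ e"
  shows "xor (2 ^ e) y = 2 ^ e + y"
proof -
  have "\<not> bit y e"
    using assms by (simp add: bit_iff_odd)
  then have "and (2 ^ e) y = 0"
    by (simp add: and.commute and_exp_eq_0_iff_not_bit)
  then show ?thesis
    by (simp add: disjunctive_add_eq_xor)
qed

lemma nimsums_cover_below_pow2:
  assumes "finite N" and "\<And>i. i < e \<Longrightarrow> \<exists>h\<in>N. f h = 2 ^ i" and "x < 2 ^ e"
  shows "\<exists>S \<subseteq> {h \<in> N. f h < 2 ^ e}. nimsum f S = x"
  using assms(2,3)
proof (induction e arbitrary: x)
  case 0
  then show ?case
    by (intro exI[of _ "{}"]) simp
next
  case (Suc e)
  show ?case
  proof (cases "x < 2 ^ e")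
    case True
    with Suc obtain S where "S \<subseteq> {h \<in> N. f h < 2 ^ e}" "nimsum f S = x"
      by auto
    moreover have "{h \<in> N. f h < 2 ^ e} \<subseteq> {h \<in> N. f h < 2 ^ Suc e}"
      by auto
    ultimately show ?thesis
      by blast
  next
    case False
    define y where "y = x - 2 ^ e"
    have y: "y < 2 ^ e" "x = 2 ^ e + y"
      using Suc.prems(2) False by (auto simp: y_def)
    with Suc obtain S where S: "S \<subseteq> {h \<in> N. f h < 2 ^ e}" "nimsum f S = y"
      by auto
    obtain h where h: "h \<in> N" "f h = 2 ^ e"
      using Suc.prems(1) by auto
    have "finite S"
      using S(1) finite_subset[OF _ assms(1)] by auto
    moreover have "h \<notin> S"
      using S(1) h by auto
    ultimately have "nimsum f (insert h S) = x"
      using S(2) h y by (simp add: nimsum_insert xor_pow2_eq_add)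
    moreover have "insert h S \<subseteq> {h \<in> N. f h < 2 ^ Suc e}"
      using S(1) h by auto
    ultimately show ?thesis by blast
  qed
qed

lemma mex_nimsums_eq_pow2:
  assumes "finite N"
    and no_bit: "\<And>h. h \<in> N \<Longrightarrow> \<not> bit (f h) e"
    and powers: "\<And>i. i < e \<Longrightarrow> \<exists>h\<in>N. f h = 2 ^ i"
    and zero: "\<exists>S \<subseteq> N. S \<noteq> {} \<and> nimsum f S = 0"
  shows "mex {nimsum f S | S. S \<subseteq> N \<and> S \<noteq> {}} = 2 ^ e"
proof (rule mex_eqI)
  show "2 ^ e \<notin> {nimsum f S | S. S \<subseteq> N \<and> S \<noteq> {}}"
  proof
    assume "2 ^ e \<in> {nimsum f S | S. S \<subseteq> N \<and> S \<noteq> {}}"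
    then obtain S where "S \<subseteq> N" "nimsum f S = 2 ^ e"
      by force
    moreover from this have "\<not> bit (nimsum f S) e"
      using no_bit finite_subset[OF _ assms(1)] by (intro not_bit_nimsum) auto
    ultimately show False
      by (simp add: bit_exp_iff)
  qed
next
  fix x :: nat
  assume "x < 2 ^ e"
  show "x \<in> {nimsum f S | S. S \<subseteq> N \<and> S \<noteq> {}}"
  proof (cases "x = 0")
    case True
    with zero show ?thesis
      by auto
  next
    case False
    obtain S where "S \<subseteq> N" "nimsum f S = x"
      using nimsums_cover_below_pow2[OF assms(1) powers \<open>x < 2 ^ e\<close>] by auto
    moreover from this False have "S \<noteq> {}"
      by auto
    ultimately show ?thesis
      by auto
  qed
qed

lemma finite_nondivs: "finite (nondivs n)"
  by (rule finite_subset[of _ "{..<n}"]) (auto simp: nondivs_def)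

lemma pm_step_cong:
  assumes "\<And>k. k \<in> nondivs n \<Longrightarrow> f k = g k"
  shows "pm_step f n = pm_step g n"
proof -
  have "nimsum f S = nimsum g S" if "S \<subseteq> nondivs n" for S
    using that assms finite_subset[OF _ finite_nondivs] by (intro nimsum_cong) auto
  then have "{nimsum f S | S. S \<subseteq> nondivs n \<and> S \<noteq> {}} =
      {nimsum g S | S. S \<subseteq> nondivs n \<and> S \<noteq> {}}"
    by (intro Collect_cong ex_cong1) auto
  then show ?thesis
    by (simp add: pm_step_def)
qed

lemma pm_upto_eq_pm_sg: "1 \<le> m \<Longrightarrow> m \<le> n \<Longrightarrow> pm_upto n m = pm_sg m"
  by (induction n) (auto simp: pm_sg_def le_Suc_eq)

lemma pm_sg_eq_pm_step:
  assumes "1 \<le> n"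
  shows "pm_sg n = pm_step pm_sg n"
proof -
  obtain m where m: "n = Suc m"
    using assms by (cases n) auto
  have "pm_sg n = pm_step (pm_upto m) n"
    by (simp add: pm_sg_def m)
  also have "\<dots> = pm_step pm_sg n"
    by (rule pm_step_cong) (auto simp: nondivs_def m intro!: pm_upto_eq_pm_sg)
  finally show ?thesis .
qed

text \<open>\<open>pm_base i = c\<^sub>i\<close> is the least heap of nim-value \<open>2 ^ i\<close>; \<open>pm_formula\<close> is the claimed
  closed form of the nim-value.\<close>

definition pm_base :: "nat \<Rightarrow> nat" where
  "pm_base i = (if i < 4 then [3, 5, 7, 8] ! i else 2 * i + 1)"

fun pm_formula :: "nat \<Rightarrow> nat" where
  "pm_formula n =
    (if n \<le> 8 then [0, 0, 0, 1, 0, 2, 1, 4, 8] ! n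
     else if odd n then 2 ^ (n div 2) else pm_formula (n div 2))"

declare pm_formula.simps [simp del]

text \<open>\<open>Suc 0\<close> rather than \<open>1\<close>, since the simplifier rewrites \<open>1 :: nat\<close> to \<open>Suc 0\<close>.\<close>
lemma pm_formula_small:
  "pm_formula (Suc 0) = 0" "pm_formula 2 = 0" "pm_formula 3 = 1" "pm_formula 4 = 0"
  "pm_formula 5 = 2" "pm_formula 6 = 1" "pm_formula 7 = 4" "pm_formula 8 = 8"
  by (simp_all add: pm_formula.simps)

lemma pm_formula_eq_0: "n \<in> {1, 2, 4} \<Longrightarrow> pm_formula n = 0"
  by (auto simp: pm_formula_small)

lemma pm_formula_odd: "8 < n \<Longrightarrow> odd n \<Longrightarrow> pm_formula n = 2 ^ (n div 2)"
  by (simp add: pm_formula.simps)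

lemma pm_formula_double:
  assumes "m \<noteq> 4"
  shows "pm_formula (2 * m) = pm_formula m"
proof (cases "m < 4")
  case True
  then have "m = 0 \<or> m = 1 \<or> m = 2 \<or> m = 3"
    by auto
  then show ?thesis
    by (auto simp: pm_formula.simps)
next
  case False
  with assms show ?thesis
    by (subst pm_formula.simps) simp
qed

lemma pm_base_ge_3: "3 \<le> pm_base i"
  by (simp add: pm_base_def nth_Cons split: nat.split)

lemma strict_mono_pm_base: "strict_mono pm_base"
  unfolding strict_mono_Suc_iff
proof
  fix i :: nat
  have "i < 3 \<or> i = 3 \<or> 4 \<le> i"
    by auto
  then show "pm_base i < pm_base (Suc i)"
    by (auto simp: pm_base_def nth_Cons split: nat.split)
qed

lemma pm_formula_pm_base: "pm_formula (pm_base i) = 2 ^ i"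
proof (cases "i < 4")
  case True
  then have "i = 0 \<or> i = 1 \<or> i = 2 \<or> i = 3"
    by auto
  then show ?thesis
    by (auto simp: pm_base_def pm_formula_small)
next
  case False
  then show ?thesis
    by (simp add: pm_base_def pm_formula_odd)
qed

lemma pm_formula_pm_base_mult_pow2: "pm_formula (pm_base i * 2 ^ a) = 2 ^ i"
proof (induction a)
  case 0
  then show ?case
    by (simp add: pm_formula_pm_base)
next
  case (Suc a)
  have "pm_base i * 2 ^ a \<noteq> 4"
  proof (cases a)
    case 0
    then show ?thesis
      by (auto simp: pm_base_def nth_Cons split: nat.split)
  next
    case (Suc b)
    then have "3 * 2 \<le> pm_base i * 2 ^ a"
      using pm_base_ge_3[of i] by (intro mult_mono) auto
    then show ?thesis
      by simp
  qed
  then have "pm_formula (2 * (pm_base i * 2 ^ a)) = pm_formula (pm_base i * 2 ^ a)"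
    by (rule pm_formula_double)
  with Suc show ?case
    by (simp add: ac_simps)
qed

lemma ex_pm_base_mult_pow2:
  assumes "1 \<le> h" and "h \<notin> {1, 2, 4}"
  shows "\<exists>i a. h = pm_base i * 2 ^ a"
  using assms
proof (induction h rule: less_induct)
  case (less h)
  consider "h \<in> {3, 5, 6, 7, 8}" | "8 < h" "odd h" | "8 < h" "even h"
    using less.prems by fastforce
  then show ?case
  proof cases
    case 1
    then have "h = pm_base 0 \<or> h = pm_base 1 \<or> h = pm_base 0 * 2 \<or> h = pm_base 2 \<or> h = pm_base 3"
      by (auto simp: pm_base_def)
    then show ?thesis
      by (metis power_0 power_one_right mult_1_right)
  next
    case 2
    then have "h = pm_base (h div 2) * 2 ^ 0"
      by (auto simp: pm_base_def elim: oddE)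
    then show ?thesis
      by blast
  next
    case 3
    then have "1 \<le> h div 2" "h div 2 \<notin> {1, 2, 4}" "h = 2 * (h div 2)"
      by auto
    with less.IH[of "h div 2"] obtain i a where "h = 2 * (pm_base i * 2 ^ a)"
      by auto
    then have "h = pm_base i * 2 ^ Suc a"
      by (simp add: ac_simps)
    then show ?thesis
      by blast
  qed
qed

lemma not_dvd_if_less_double:
  fixes d n :: nat
  assumes "d < n" and "n < 2 * d"
  shows "\<not> d dvd n"
proof
  assume "d dvd n"
  then have "d dvd n - d"
    by simp
  moreover have "0 < n - d" "n - d < d"
    using assms by auto
  ultimately show False
    using nat_dvd_not_less by blast
qed

lemma ex_mult_pow2_bracket:
  fixes c n :: nat
  assumes "0 < c" and "c < n"
  shows "\<exists>a. c * 2 ^ a < n \<and> n \<le> c * 2 ^ Suc a"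
  using assms
proof (induction "n - c" arbitrary: c rule: less_induct)
  case less
  show ?case
  proof (cases "n \<le> 2 * c")
    case True
    with less.prems show ?thesis
      by (intro exI[of _ 0]) auto
  next
    case False
    with less obtain a where "2 * c * 2 ^ a < n" "n \<le> 2 * c * 2 ^ Suc a"
      using less.hyps[of "2 * c"] by fastforce
    then show ?thesis
      by (intro exI[of _ "Suc a"]) (simp add: ac_simps)
  qed
qed

lemma nondivs_pm_base_powers:
  assumes n: "n = pm_base e * 2 ^ b" and "i < e"
  shows "\<exists>h\<in>nondivs n. pm_formula h = 2 ^ i"
proof -
  have "pm_base i < pm_base e"
    using strict_mono_pm_base \<open>i < e\<close> by (rule strict_monoD)
  also have "pm_base e \<le> n"
    using n by simp
  finally have "pm_base i < n" .
  then obtain a where a: "pm_base i * 2 ^ a < n" "n \<le> pm_base i * 2 ^ Suc a"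
    using ex_mult_pow2_bracket[of "pm_base i" n] pm_base_ge_3[of i] by auto
  have "n \<noteq> pm_base i * 2 ^ Suc a" \<comment> \<open>the two heaps have different values\<close>
  proof
    assume "n = pm_base i * 2 ^ Suc a"
    then have "(2::nat) ^ e = 2 ^ i"
      using n by (metis pm_formula_pm_base_mult_pow2)
    with \<open>i < e\<close> show False
      by simp
  qed
  with a(2) have "n < 2 * (pm_base i * 2 ^ a)"
    by simp
  with a(1) have "\<not> pm_base i * 2 ^ a dvd n"
    by (rule not_dvd_if_less_double)
  moreover have "1 \<le> pm_base i * 2 ^ a"
    using pm_base_ge_3[of i] by simp
  ultimately show ?thesis
    using a(1)
    by (intro bexI[of _ "pm_base i * 2 ^ a"]) (auto simp: nondivs_def pm_formula_pm_base_mult_pow2)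
qed

lemma nondivs_zero_nimsum:
  assumes "3 \<le> n" and "n \<noteq> 4"
  shows "\<exists>S \<subseteq> nondivs n. S \<noteq> {} \<and> nimsum pm_formula S = 0"
proof -
  consider "odd n" | "even n" "\<not> 4 dvd n" | "4 dvd n"
    by auto
  then show ?thesis
  proof cases
    case 1
    with assms have "2 \<in> nondivs n"
      by (auto simp: nondivs_def)
    then show ?thesis
      by (intro exI[of _ "{2}"]) (auto simp: nimsum_singleton pm_formula_small)
  next
    case 2
    with assms have "4 \<in> nondivs n"
      by (auto simp: nondivs_def elim!: evenE)
    then show ?thesis
      by (intro exI[of _ "{4}"]) (auto simp: nimsum_singleton pm_formula_small)
  next
    case 3
    define m where "m = n div 2 - 1"
    have n: "n = 2 * m + 2" and "3 \<le> m" and "m \<noteq> 4"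
      using 3 assms unfolding m_def by presburger+
    have "\<not> m dvd n"
    proof
      assume "m dvd n"
      then have "m dvd 2"
        unfolding n by (metis dvd_add_right_iff dvd_triv_right)
      then have "m \<le> 2"
        by (rule dvd_imp_le) simp
      with \<open>3 \<le> m\<close> show False
        by simp
    qed
    moreover have "\<not> 2 * m dvd n"
      using \<open>3 \<le> m\<close> by (intro not_dvd_if_less_double) (auto simp: n)
    ultimately have "{m, 2 * m} \<subseteq> nondivs n"
      using \<open>3 \<le> m\<close> by (auto simp: nondivs_def n)
    moreover have "nimsum pm_formula {m, 2 * m} = 0"
      using \<open>3 \<le> m\<close> \<open>m \<noteq> 4\<close> by (simp add: nimsum_doubleton pm_formula_double)
    ultimately show ?thesis
      by (intro exI[of _ "{m, 2 * m}"]) simp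
  qed
qed

lemma not_bit_pm_formula_nondivs:
  assumes n: "n = pm_base e * 2 ^ b" and h: "h \<in> nondivs n"
  shows "\<not> bit (pm_formula h) e"
proof (cases "h \<in> {1, 2, 4}")
  case True
  then show ?thesis
    by (simp add: pm_formula_eq_0)
next
  case False
  moreover have "1 \<le> h" "h < n" "\<not> h dvd n"
    using h by (auto simp: nondivs_def)
  ultimately obtain j a where h_eq: "h = pm_base j * 2 ^ a"
    using ex_pm_base_mult_pow2 by blast
  have "j \<noteq> e"
  proof
    assume "j = e"
    with \<open>h < n\<close> have "a < b"
      by (simp add: h_eq n)
    then have "h dvd n"
      by (simp add: h_eq n \<open>j = e\<close> le_imp_power_dvd)
    with \<open>\<not> h dvd n\<close> show False ..
  qed
  then show ?thesis
    by (simp add: h_eq pm_formula_pm_base_mult_pow2 bit_exp_iff)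
qed

lemma pm_step_pm_formula:
  assumes "1 \<le> n"
  shows "pm_step pm_formula n = pm_formula n"
proof (cases "n \<in> {1, 2, 4}")
  case True
  have "nondivs 1 = {}" "nondivs 2 = {}"
    by (auto simp: nondivs_def le_less)
  moreover have "nondivs 4 = {k \<in> {1, 2, 3}. \<not> k dvd 4}"
    unfolding nondivs_def by auto
  moreover have "\<dots> = {3}"
    by auto
  ultimately have "nondivs n \<subseteq> {3}"
    using True by (elim insertE emptyE) simp_all
  have "0 \<notin> {nimsum pm_formula S | S. S \<subseteq> nondivs n \<and> S \<noteq> {}}"
  proof
    assume "0 \<in> {nimsum pm_formula S | S. S \<subseteq> nondivs n \<and> S \<noteq> {}}"
    then obtain S where "S \<subseteq> nondivs n" "S \<noteq> {}" "nimsum pm_formula S = 0"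
      by force
    with \<open>nondivs n \<subseteq> {3}\<close> have "S = {3}" "nimsum pm_formula S = 0"
      using subset_singleton_iff by blast+
    then show False
      by (simp add: nimsum_singleton pm_formula_small)
  qed
  then have "pm_step pm_formula n = 0"
    unfolding pm_step_def by (rule mex_eqI) simp
  with True show ?thesis
    by (simp add: pm_formula_eq_0)
next
  case False
  with assms obtain e b where n: "n = pm_base e * 2 ^ b"
    using ex_pm_base_mult_pow2 by blast
  have zero: "\<exists>S \<subseteq> nondivs n. S \<noteq> {} \<and> nimsum pm_formula S = 0"
    using assms False by (intro nondivs_zero_nimsum) auto
  have "pm_step pm_formula n = 2 ^ e"
    unfolding pm_step_def
    using finite_nondivs not_bit_pm_formula_nondivs[OF n] nondivs_pm_base_powers[OF n] zero
    by (rule mex_nimsums_eq_pow2)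
  then show ?thesis
    by (simp add: n pm_formula_pm_base_mult_pow2)
qed

lemma pm_sg_eq_pm_formula: "1 \<le> n \<Longrightarrow> pm_sg n = pm_formula n"
proof (induction n rule: less_induct)
  case (less n)
  have "pm_sg n = pm_step pm_sg n"
    using less.prems by (rule pm_sg_eq_pm_step)
  also have "\<dots> = pm_step pm_formula n"
    by (rule pm_step_cong) (auto simp: nondivs_def intro!: less.IH)
  also have "\<dots> = pm_formula n"
    using less.prems by (rule pm_step_pm_formula)
  finally show ?case .
qed

theorem mainTheorem16:
  shows "pm_sg 1 = 0 \<and> pm_sg 2 = 0 \<and> pm_sg 3 = 1 \<and> pm_sg 4 = 0 \<and>
         pm_sg 5 = 2 \<and> pm_sg 6 = 1 \<and> pm_sg 7 = 4 \<and> pm_sg 8 = 8 \<and>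
         (\<forall>k::nat. k \<ge> 4 \<longrightarrow> pm_sg (2 * k + 1) = 2 ^ k) \<and>
         (\<forall>n::nat. n \<ge> 10 \<and> even n \<longrightarrow> pm_sg n = pm_sg (n div 2))"
proof (intro conjI allI impI)
  fix k :: nat
  assume "4 \<le> k"
  then show "pm_sg (2 * k + 1) = 2 ^ k"
    by (simp add: pm_sg_eq_pm_formula pm_formula_odd)
next
  fix n :: nat
  assume "10 \<le> n \<and> even n"
  then obtain m where "n = 2 * m" "5 \<le> m"
    by (auto elim!: evenE)
  then show "pm_sg n = pm_sg (n div 2)"
    by (simp add: pm_sg_eq_pm_formula pm_formula_double)
qed (simp_all add: pm_sg_eq_pm_formula pm_formula_small)

end
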